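(* For every $(\beta,\delta)\in[0,\infty)^2$, the limit $$f(\beta,\delta):=\lim_{L\to\infty}\frac1L\log Z_{L,\beta,\delta}$$ exists, belongs to $[0,\infty)$, and satisfies $f(\beta,\delta)=\max\{f(\beta,0),\delta\}$.
   Context: Interacting partially-directed self-avoiding walk (IPDSAW) with an attractive vertical wall. Fix $\beta\ge0,\ \delta\ge0$. For $L\in\mathbb N$ and $1\le N\le L$ let $\mathcal L_{N,L}=\{\ell=(\ell_1,\dots,\ell_N)\in\mathbb Z^N:\sum_{n=1}^N|\ell_n|+N=L\}$ and $\Omega_L=\bigcup_{N=1}^L\mathcal L_{N,L}$. For $\ell\in\mathcal L_{N,L}$ the Hamiltonian is $H_{L,\beta,\delta}(\ell)=\delta|\ell_1|+\beta\sum_{n=1}^{N-1}\ell_n\,\tilde\wedge\,\ell_{n+1}$, where $x\,\tilde\wedge\,y=\min(|x|,|y|)$ if $xy<0$ and $0$ otherwise. The partition function is $Z_{L,\beta,\delta}=\sum_{\ell\in\Omega_L}e^{H_{L,\beta,\delta}(\ell)}$. The limit $f(\beta,0)=\lim_{L\to\infty}\frac1L\log Z_{L,\beta,0}$ (wall interaction switched off) is known to exist. *)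

theory Defs
  imports Complex_Main
begin

text \<open>Configurations: a configuration with N stretches is a list l of integers of
length N; l ! 0 is the first stretch (the one interacting with the wall).\<close>

definition tilde_wedge :: "int \<Rightarrow> int \<Rightarrow> int" where
  "tilde_wedge x y = (if x * y < 0 then min \<bar>x\<bar> \<bar>y\<bar> else 0)"

definition LNL :: "nat \<Rightarrow> nat \<Rightarrow> int list set" where
  "LNL N L = {l. length l = N \<and> (\<Sum>n<N. \<bar>l ! n\<bar>) + int N = int L}"

definition Omega :: "nat \<Rightarrow> int list set" where
  "Omega L = (\<Union>N\<in>{1..L}. LNL N L)"

definition hamiltonian :: "real \<Rightarrow> real \<Rightarrow> int list \<Rightarrow> real" where
  "hamiltonian \<beta> \<delta> l =
     \<delta> * of_int \<bar>l ! 0\<bar> +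
     \<beta> * (\<Sum>n<length l - 1. of_int (tilde_wedge (l ! n) (l ! (n + 1))))"

definition partition_fn :: "nat \<Rightarrow> real \<Rightarrow> real \<Rightarrow> real" where
  "partition_fn L \<beta> \<delta> = (\<Sum>l\<in>Omega L. exp (hamiltonian \<beta> \<delta> l))"

end

theory Submission
  imports Defs "HOL-Analysis.Convex" "HOL-Real_Asymp.Real_Asymp"
begin

text \<open>Concatenating walks never destroys interactions, so \<open>ln Z(L,\<beta>,0)\<close> is superadditive and
  Fekete's lemma gives \<open>f(\<beta>,0)\<close>; alternating walks show \<open>f(\<beta>,0) \<ge> \<beta>\<close>. From below,
  \<open>Z(L,\<beta>,\<delta>) \<ge> Z(L,\<beta>,0)\<close> and the single-stretch walk gives \<open>Z(L,\<beta>,\<delta>) \<ge> exp(\<delta>(L-1))\<close>.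
  From above, split off the first stretch x: its interaction with the next stretch y is at most
  \<open>\<beta>\<bar>y\<bar>\<close>, so \<open>Z(L,\<beta>,\<delta>)\<close> is bounded by a sum over x of \<open>exp(\<delta>\<bar>x\<bar>)\<close> times a partition function
  with wall parameter \<beta>; if the latter grows at rate r, then \<open>Z(L,\<beta>,\<delta>)\<close> grows at rate \<open>max \<delta> r\<close>.
  Finally \<open>\<delta> \<mapsto> ln Z(L,\<beta>,\<delta>)\<close> is convex (Hoelder), which forces \<open>r \<le> f(\<beta>,0)\<close>.\<close>

section \<open>Fekete's lemma and Hoelder's inequality\<close>

lemma superadditive_tendsto:
  fixes a :: "nat \<Rightarrow> real"
  assumes nonneg: "\<And>n. n \<ge> 1 \<Longrightarrow> 0 \<le> a n"
    and superadd: "\<And>m n. m \<ge> 1 \<Longrightarrow> n \<ge> 1 \<Longrightarrow> a m + a n \<le> a (m + n)"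
    and bounded: "\<And>n. n \<ge> 1 \<Longrightarrow> a n \<le> c * real n"
  shows "\<exists>l. (\<lambda>n. a n / n) \<longlonglongrightarrow> l \<and> (\<forall>n\<ge>1. a n \<le> l * n)"
proof -
  define l where "l = (SUP n\<in>{1..}. a n / n)"
  have bdd: "bdd_above ((\<lambda>n. a n / n) ` {1..})"
    using bounded by (intro bdd_aboveI2[of _ _ c]) (simp add: divide_le_eq mult.commute)
  have upper: "a n / n \<le> l" if "n \<ge> 1" for n
    unfolding l_def by (rule cSUP_upper[OF _ bdd]) (use that in auto)
  have multiple: "real q * a m \<le> a (q * m + s)" if "m \<ge> 1" "s \<ge> 1" for q m s
  proof (induction q)
    case 0 then show ?case using nonneg[OF \<open>s \<ge> 1\<close>] by simp
  next
    case (Suc q)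
    have "a m + a (q * m + s) \<le> a (m + (q * m + s))" using superadd that by simp
    then show ?case using Suc by (simp add: algebra_simps)
  qed
  have "(\<lambda>n. a n / n) \<longlonglongrightarrow> l"
  proof (rule order_tendstoI)
    fix x assume "x < l"
    then obtain m where m: "m \<ge> 1" "x < a m / m"
      using less_cSUP_iff[OF _ bdd] unfolding l_def by force
    define A where "A = a m / m"
    have lower: "a n / n \<ge> A - m * A / n" if n: "n \<ge> m" for n
    proof -
      define q where "q = (n - 1) div m"
      have n_eq: "n = q * m + ((n - 1) mod m + 1)"
        using n m by (simp add: q_def)
      have "n \<le> q * m + m"
        using n_eq mod_less_divisor[of m "n - 1"] m by linarith
      then have "real n \<le> real q * m + m" by (metis of_nat_add of_nat_le_iff of_nat_mult)
      then have "(real n - m) * A \<le> (real q * m) * A"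
        using m nonneg[OF m(1)] by (intro mult_right_mono) (auto simp: A_def)
      also have "\<dots> = real q * a m" using m by (simp add: A_def)
      also have "\<dots> \<le> a n" using multiple[OF m(1), of "(n - 1) mod m + 1" q] n_eq by simp
      finally have "(real n - m) * A / n \<le> a n / n" by (simp add: divide_right_mono)
      moreover have "(real n - m) * A / n = A - m * A / n" using n m by (simp add: field_simps)
      ultimately show ?thesis by simp
    qed
    have "(\<lambda>n. A - m * A / n) \<longlonglongrightarrow> A" by real_asymp
    then have "\<forall>\<^sub>F n in sequentially. x < A - m * A / n"
      using m(2) by (intro order_tendstoD(1)) (auto simp: A_def)
    with eventually_ge_at_top[of m] show "\<forall>\<^sub>F n in sequentially. x < a n / n"
      by eventually_elim (use lower in fastforce)
  next
    fix x assume "l < x"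
    then show "\<forall>\<^sub>F n in sequentially. a n / n < x"
      using upper by (intro eventually_sequentiallyI[of 1]) fastforce
  qed
  moreover have "a n \<le> l * n" if "n \<ge> 1" for n
    using upper[OF that] that by (simp add: divide_le_eq)
  ultimately show ?thesis by blast
qed

lemma Holder_sum_powr:
  fixes a b :: "'i \<Rightarrow> real"
  assumes "finite A" "\<And>i. i \<in> A \<Longrightarrow> 0 < a i" "\<And>i. i \<in> A \<Longrightarrow> 0 < b i" "0 \<le> t" "t \<le> 1"
  shows "(\<Sum>i\<in>A. a i powr t * b i powr (1 - t)) \<le> sum a A powr t * sum b A powr (1 - t)"
proof (cases "A = {}")
  case False
  define SA SB where "SA = sum a A" and "SB = sum b A"
  have pos: "SA > 0" "SB > 0" unfolding SA_def SB_def using assms False by (auto intro: sum_pos)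
  define P where "P = SA powr t * SB powr (1 - t)"
  have "a i powr t * b i powr (1 - t) \<le> (t * P / SA) * a i + ((1 - t) * P / SB) * b i" if "i \<in> A" for i
  proof -
    have "a i powr t * b i powr (1 - t) = P * ((a i / SA) powr t * (b i / SB) powr (1 - t))"
      using pos assms(2,3)[OF that] by (simp add: P_def powr_divide)
    also have "\<dots> \<le> P * (t * (a i / SA) + (1 - t) * (b i / SB))"
      using Youngs_inequality_0[of t "1 - t" "a i / SA" "b i / SB"] assms pos that
      by (intro mult_left_mono) (auto simp: P_def)
    also have "\<dots> = (t * P / SA) * a i + ((1 - t) * P / SB) * b i" by (simp add: algebra_simps)
    finally show ?thesis .
  qed
  then have "(\<Sum>i\<in>A. a i powr t * b i powr (1 - t)) \<le> (\<Sum>i\<in>A. (t * P / SA) * a i + ((1 - t) * P / SB) * b i)"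
    by (rule sum_mono)
  also have "\<dots> = (t * P / SA) * sum a A + ((1 - t) * P / SB) * sum b A"
    by (simp add: sum.distrib sum_distrib_left)
  also have "\<dots> = P" using pos by (simp add: SA_def SB_def field_simps)
  finally show ?thesis by (simp add: P_def SA_def SB_def)
qed simp

section \<open>Exponential growth rates\<close>

text \<open>For positive \<open>Z\<close>, \<open>exp_growth_le Z r\<close> means \<open>limsup (ln (Z n) / n) \<le> r\<close>.\<close>

definition exp_growth_le :: "(nat \<Rightarrow> real) \<Rightarrow> real \<Rightarrow> bool" where
  "exp_growth_le Z r \<longleftrightarrow> (\<forall>\<epsilon>>0. \<exists>C>0. \<forall>n. Z n \<le> C * exp ((r + \<epsilon>) * n))"

lemma exp_growth_leI:
  assumes "C > 0" "\<And>n. Z n \<le> C * exp (r * n)"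
  shows "exp_growth_le Z r"
  unfolding exp_growth_le_def
proof (intro allI impI)
  fix \<epsilon> :: real assume "\<epsilon> > 0"
  have "C * exp (r * n) \<le> C * exp ((r + \<epsilon>) * n)" for n :: nat
    using assms(1) \<open>\<epsilon> > 0\<close> by (simp add: algebra_simps)
  then show "\<exists>C>0. \<forall>n. Z n \<le> C * exp ((r + \<epsilon>) * n)"
    using assms by (meson order_trans)
qed

lemma exp_growth_le_mono:
  assumes "exp_growth_le Z r" "r \<le> s"
  shows "exp_growth_le Z s"
  unfolding exp_growth_le_def
proof (intro allI impI)
  fix \<epsilon> :: real assume "\<epsilon> > 0"
  then obtain C where C: "C > 0" "\<And>n. Z n \<le> C * exp ((r + \<epsilon>) * n)"
    using assms(1) unfolding exp_growth_le_def by blast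
  have "C * exp ((r + \<epsilon>) * n) \<le> C * exp ((s + \<epsilon>) * n)" for n :: nat
    using C(1) assms(2) by (simp add: mult_right_mono)
  then show "\<exists>C>0. \<forall>n. Z n \<le> C * exp ((s + \<epsilon>) * n)"
    using C by (meson order_trans)
qed

lemma exp_growth_le_closed:
  assumes "\<And>s. r < s \<Longrightarrow> exp_growth_le Z s"
  shows "exp_growth_le Z r"
  unfolding exp_growth_le_def
proof (intro allI impI)
  fix \<epsilon> :: real assume "\<epsilon> > 0"
  then have "exp_growth_le Z (r + \<epsilon> / 2)" by (intro assms) simp
  then show "\<exists>C>0. \<forall>n. Z n \<le> C * exp ((r + \<epsilon>) * n)"
    using \<open>\<epsilon> > 0\<close> unfolding exp_growth_le_def by (auto dest!: spec[of _ "\<epsilon> / 2"] simp: add.commute)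
qed

lemma exp_growth_le_linear_factor:
  assumes "\<And>n. Z n \<le> C * real n * exp (r * n)"
  shows "exp_growth_le Z r"
  unfolding exp_growth_le_def
proof (intro allI impI)
  fix \<epsilon> :: real assume \<epsilon>: "\<epsilon> > 0"
  define D where "D = max C 1 / \<epsilon>"
  have "Z n \<le> D * exp ((r + \<epsilon>) * n)" for n
  proof -
    have "\<epsilon> * n \<le> exp (\<epsilon> * n)" using exp_ge_add_one_self[of "\<epsilon> * n"] by linarith
    then have "real n \<le> exp (\<epsilon> * n) / \<epsilon>" using \<epsilon> by (simp add: le_divide_eq mult.commute)
    then have "C * real n \<le> max C 1 * (exp (\<epsilon> * n) / \<epsilon>)" by (intro mult_mono) auto
    then have "C * real n * exp (r * n) \<le> max C 1 * (exp (\<epsilon> * n) / \<epsilon>) * exp (r * n)"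
      by (rule mult_right_mono) simp
    also have "\<dots> = D * exp ((r + \<epsilon>) * n)" by (simp add: D_def algebra_simps flip: exp_add)
    finally show ?thesis using assms[of n] by linarith
  qed
  moreover have "D > 0" using \<epsilon> by (simp add: D_def)
  ultimately show "\<exists>C>0. \<forall>n. Z n \<le> C * exp ((r + \<epsilon>) * n)" by blast
qed

lemma exp_growth_le_powr_mult:
  assumes "exp_growth_le X a" "exp_growth_le Y b" "0 \<le> t" "t \<le> 1"
    and "\<And>n. 0 \<le> X n" "\<And>n. 0 \<le> Y n" "\<And>n. Z n \<le> X n powr t * Y n powr (1 - t)"
  shows "exp_growth_le Z (t * a + (1 - t) * b)"
  unfolding exp_growth_le_def
proof (intro allI impI)
  fix \<epsilon> :: real assume "\<epsilon> > 0"
  then obtain C D where C: "C > 0" "\<And>n. X n \<le> C * exp ((a + \<epsilon>) * n)"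
    and D: "D > 0" "\<And>n. Y n \<le> D * exp ((b + \<epsilon>) * n)"
    using assms(1,2) unfolding exp_growth_le_def by meson
  have "Z n \<le> (C powr t * D powr (1 - t)) * exp ((t * a + (1 - t) * b + \<epsilon>) * n)" for n
  proof -
    have "Z n \<le> (C * exp ((a + \<epsilon>) * n)) powr t * (D * exp ((b + \<epsilon>) * n)) powr (1 - t)"
      using assms(3-7) C D by (meson mult_mono powr_mono2 powr_ge_zero diff_ge_0_iff_ge order_trans)
    also have "\<dots> = (C powr t * D powr (1 - t)) * exp ((t * a + (1 - t) * b + \<epsilon>) * n)"
      using C(1) D(1) by (simp add: powr_mult exp_powr_real algebra_simps flip: exp_add)
    finally show ?thesis .
  qed
  moreover have "C powr t * D powr (1 - t) > 0" using C(1) D(1) by simp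
  ultimately show "\<exists>C>0. \<forall>n. Z n \<le> C * exp ((t * a + (1 - t) * b + \<epsilon>) * n)" by blast
qed

lemma exp_growth_le_lower_bound:
  fixes a :: real
  assumes "exp_growth_le Z r" "c > 0" "\<And>n. n \<ge> 1 \<Longrightarrow> c * exp (a * n) \<le> Z n"
  shows "a \<le> r"
proof (rule ccontr)
  assume "\<not> a \<le> r"
  define \<epsilon> where "\<epsilon> = (a - r) / 2"
  have \<epsilon>: "\<epsilon> > 0" using \<open>\<not> a \<le> r\<close> by (simp add: \<epsilon>_def)
  then obtain C where C: "C > 0" "\<And>n. Z n \<le> C * exp ((r + \<epsilon>) * n)"
    using assms(1) unfolding exp_growth_le_def by blast
  obtain n :: nat where n: "C / (c * \<epsilon>) < n" using reals_Archimedean2 by blast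
  then have "n \<ge> 1" using C(1) assms(2) \<epsilon> by (cases n) (auto simp: field_simps)
  have "c * exp (\<epsilon> * n) * exp ((r + \<epsilon>) * n) = c * exp (a * n)"
    by (simp add: \<epsilon>_def algebra_simps flip: exp_add)
  also have "\<dots> \<le> C * exp ((r + \<epsilon>) * n)" using assms(3)[OF \<open>n \<ge> 1\<close>] C(2)[of n] by linarith
  finally have "c * exp (\<epsilon> * n) \<le> C" by simp
  moreover have "\<epsilon> * n \<le> exp (\<epsilon> * n)" using exp_ge_add_one_self[of "\<epsilon> * n"] by linarith
  then have "c * (\<epsilon> * n) \<le> c * exp (\<epsilon> * n)" using assms(2) by simp
  moreover have "C < c * (\<epsilon> * n)" using n assms(2) \<epsilon> by (simp add: field_simps)
  ultimately show False by linarith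
qed

lemma exp_growth_le_tendsto:
  assumes "exp_growth_le Z r" "g \<longlonglongrightarrow> r"
    and "\<forall>\<^sub>F n in sequentially. 0 < Z n \<and> g n \<le> ln (Z n) / n"
  shows "(\<lambda>n. ln (Z n) / n) \<longlonglongrightarrow> r"
proof (rule order_tendstoI)
  fix x assume "x < r"
  with assms(2) have "\<forall>\<^sub>F n in sequentially. x < g n" by (rule order_tendstoD)
  with assms(3) show "\<forall>\<^sub>F n in sequentially. x < ln (Z n) / n" by eventually_elim auto
next
  fix x assume "r < x"
  define \<epsilon> where "\<epsilon> = (x - r) / 2"
  have \<epsilon>: "\<epsilon> > 0" using \<open>r < x\<close> by (simp add: \<epsilon>_def)
  then obtain C where C: "C > 0" "\<And>n. Z n \<le> C * exp ((r + \<epsilon>) * n)"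
    using assms(1) unfolding exp_growth_le_def by blast
  have "(\<lambda>n. ln C / real n) \<longlonglongrightarrow> 0" by real_asymp
  then have "\<forall>\<^sub>F n in sequentially. ln C / n < \<epsilon>" using \<epsilon> by (rule order_tendstoD)
  with assms(3) eventually_ge_at_top[of 1]
  show "\<forall>\<^sub>F n in sequentially. ln (Z n) / n < x"
  proof eventually_elim
    case (elim n)
    have "ln (Z n) \<le> ln (C * exp ((r + \<epsilon>) * n))" using elim C by (subst ln_le_cancel_iff) auto
    also have "\<dots> = ln C + (r + \<epsilon>) * n" using C(1) by (simp add: ln_mult)
    finally have "ln (Z n) / n \<le> ln C / n + (r + \<epsilon>)" using elim by (simp add: field_simps)
    then show ?case using elim by (simp add: \<epsilon>_def field_simps)
  qed
qed

section \<open>Walks and their partition function\<close>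

definition walk_length :: "int list \<Rightarrow> int" where
  "walk_length l = (\<Sum>x\<leftarrow>l. \<bar>x\<bar> + 1)"

fun interaction :: "int list \<Rightarrow> int" where
  "interaction (x # y # r) = tilde_wedge x y + interaction (y # r)"
| "interaction _ = 0"

lemma walk_length_Nil [simp]: "walk_length [] = 0"
  and walk_length_Cons [simp]: "walk_length (x # l) = \<bar>x\<bar> + 1 + walk_length l"
  and walk_length_append [simp]: "walk_length (l @ l') = walk_length l + walk_length l'"
  by (simp_all add: walk_length_def)

lemma length_le_walk_length: "int (length l) \<le> walk_length l"
  by (induction l) auto

lemma walk_length_nonneg: "0 \<le> walk_length l"
  using length_le_walk_length[of l] by linarith

lemma abs_less_walk_length: "x \<in> set l \<Longrightarrow> \<bar>x\<bar> < walk_length l"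
  by (induction l) (auto simp: walk_length_nonneg less_le_trans add.commute add_strict_increasing)

lemma walk_length_eq_0_iff [simp]: "walk_length l = 0 \<longleftrightarrow> l = []"
  using length_le_walk_length[of l] by (cases l) auto

lemma tilde_wedge_nonneg: "0 \<le> tilde_wedge x y"
  and tilde_wedge_le_abs: "tilde_wedge x y \<le> \<bar>y\<bar>"
  by (simp_all add: tilde_wedge_def)

lemma interaction_eq_sum:
  "interaction l = (\<Sum>n<length l - 1. tilde_wedge (l ! n) (l ! (n + 1)))"
proof (induction l rule: interaction.induct)
  case (1 x y r)
  have "(\<Sum>n<length (x # y # r) - 1. tilde_wedge ((x # y # r) ! n) ((x # y # r) ! (n + 1)))
      = tilde_wedge x y + (\<Sum>n<length (y # r) - 1. tilde_wedge ((y # r) ! n) ((y # r) ! (n + 1)))"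
    by (simp add: sum.lessThan_Suc_shift del: sum.lessThan_Suc)
  then show ?case using 1 by simp
qed auto

lemma interaction_le_Cons: "interaction l \<le> interaction (x # l)"
  by (cases l) (auto simp: tilde_wedge_nonneg)

lemma interaction_append: "interaction l + interaction l' \<le> interaction (l @ l')"
  by (induction l rule: interaction.induct) (auto simp: interaction_le_Cons)

lemma Omega_eq: "Omega L = {l. l \<noteq> [] \<and> walk_length l = int L}"
proof -
  have length_eq: "(\<Sum>n<length l. \<bar>l ! n\<bar>) + int (length l) = walk_length l" for l :: "int list"
    by (induction l) (simp_all add: sum.lessThan_Suc_shift del: sum.lessThan_Suc)
  show ?thesis
  proof (intro set_eqI iffI)
    fix l assume "l \<in> Omega L"
    then show "l \<in> {l. l \<noteq> [] \<and> walk_length l = int L}"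
      using length_eq[of l] by (auto simp: Omega_def LNL_def)
  next
    fix l assume l: "l \<in> {l. l \<noteq> [] \<and> walk_length l = int L}"
    then have "length l \<in> {1..L}"
      using length_le_walk_length[of l] by (cases l) auto
    moreover have "l \<in> LNL (length l) L" using l length_eq[of l] by (simp add: LNL_def)
    ultimately show "l \<in> Omega L" unfolding Omega_def by blast
  qed
qed

lemma finite_Omega: "finite (Omega L)"
proof (rule finite_subset)
  show "Omega L \<subseteq> {l. set l \<subseteq> {-int L..int L} \<and> length l \<le> L}"
  proof safe
    fix l x assume "l \<in> Omega L" "x \<in> set l"
    then show "x \<in> {-int L..int L}" using abs_less_walk_length[of x l] by (auto simp: Omega_eq)
  next
    fix l assume "l \<in> Omega L"
    then show "length l \<le> L" using length_le_walk_length[of l] by (simp add: Omega_eq)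
  qed
qed (auto intro: finite_lists_length_le)

lemma partition_fn_eq:
  "partition_fn L \<beta> \<delta> = (\<Sum>l\<in>Omega L. exp (\<delta> * of_int \<bar>l ! 0\<bar> + \<beta> * of_int (interaction l)))"
  unfolding partition_fn_def hamiltonian_def interaction_eq_sum of_int_sum ..

lemma partition_fn_ge_exp:
  assumes "L \<ge> 1"
  shows "exp (\<delta> * (real L - 1)) \<le> partition_fn L \<beta> \<delta>"
proof -
  have "[int L - 1] \<in> Omega L" using assms by (simp add: Omega_eq)
  then have "exp (\<delta> * of_int \<bar>[int L - 1] ! 0\<bar> + \<beta> * of_int (interaction [int L - 1]))
      \<le> partition_fn L \<beta> \<delta>"
    unfolding partition_fn_eq by (intro member_le_sum finite_Omega) auto
  then show ?thesis using assms by (simp add: of_nat_diff)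
qed

lemma partition_fn_pos: "L \<ge> 1 \<Longrightarrow> 0 < partition_fn L \<beta> \<delta>"
  using partition_fn_ge_exp by (rule less_le_trans[OF exp_gt_zero])

lemma partition_fn_0 [simp]: "partition_fn 0 \<beta> \<delta> = 0"
  by (simp add: partition_fn_def Omega_def)

lemma partition_fn_nonneg: "0 \<le> partition_fn L \<beta> \<delta>"
  by (simp add: partition_fn_eq sum_nonneg)

lemma partition_fn_mono:
  "\<delta> \<le> \<delta>' \<Longrightarrow> partition_fn L \<beta> \<delta> \<le> partition_fn L \<beta> \<delta>'"
  unfolding partition_fn_eq by (intro sum_mono) (simp add: mult_right_mono)

lemma partition_fn_powr_le:
  assumes "0 \<le> t" "t \<le> 1"
  shows "partition_fn L \<beta> (t * \<delta>) \<le> partition_fn L \<beta> \<delta> powr t * partition_fn L \<beta> 0 powr (1 - t)"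
proof -
  let ?w = "\<lambda>\<delta> l. exp (\<delta> * of_int \<bar>l ! 0\<bar> + \<beta> * of_int (interaction l))"
  have "partition_fn L \<beta> (t * \<delta>) = (\<Sum>l\<in>Omega L. ?w \<delta> l powr t * ?w 0 l powr (1 - t))"
    unfolding partition_fn_eq
    by (intro sum.cong) (simp_all add: exp_powr_real algebra_simps flip: exp_add)
  also have "\<dots> \<le> partition_fn L \<beta> \<delta> powr t * partition_fn L \<beta> 0 powr (1 - t)"
    unfolding partition_fn_eq by (rule Holder_sum_powr[OF finite_Omega _ _ assms]) auto
  finally show ?thesis .
qed

lemma append_eq_append_same_walk_length:
  assumes "a @ b = c @ d" "walk_length a = walk_length c"
  shows "a = c \<and> b = d"
proof -
  obtain us where "a = c @ us \<and> us @ b = d \<or> a @ us = c \<and> b = us @ d"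
    using assms(1) by (auto simp: append_eq_append_conv2)
  moreover from this have "us = []" using assms(2) by auto
  ultimately show ?thesis by auto
qed

lemma partition_fn_supermult:
  assumes "\<beta> \<ge> 0"
  shows "partition_fn L \<beta> 0 * partition_fn L' \<beta> 0 \<le> partition_fn (L + L') \<beta> 0"
proof -
  let ?A = "Omega L \<times> Omega L'"
  let ?w = "\<lambda>l. exp (\<beta> * of_int (interaction l))"
  have "partition_fn L \<beta> 0 * partition_fn L' \<beta> 0 = (\<Sum>(l, l')\<in>?A. ?w l * ?w l')"
    unfolding partition_fn_eq by (simp add: sum_product sum.cartesian_product case_prod_beta)
  also have "\<dots> \<le> (\<Sum>(l, l')\<in>?A. ?w (l @ l'))"
  proof (intro sum_mono, clarify)
    fix l l'
    have "\<beta> * interaction l + \<beta> * interaction l' \<le> \<beta> * interaction (l @ l')"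
      using mult_left_mono[OF of_int_le_iff[THEN iffD2, OF interaction_append] assms]
      by (simp add: distrib_left)
    then show "?w l * ?w l' \<le> ?w (l @ l')" by (simp flip: exp_add)
  qed
  also have "\<dots> = (\<Sum>l\<in>(\<lambda>(l, l'). l @ l') ` ?A. ?w l)"
    by (rule sum.reindex_cong[symmetric, OF _ refl])
      (auto intro!: inj_onI dest: append_eq_append_same_walk_length simp: Omega_eq)
  also have "\<dots> \<le> (\<Sum>l\<in>Omega (L + L'). ?w l)"
    by (intro sum_mono2 finite_Omega) (auto simp: Omega_eq)
  finally show ?thesis unfolding partition_fn_eq by simp
qed

fun alternating :: "int \<Rightarrow> nat \<Rightarrow> int list" where
  "alternating k 0 = []"
| "alternating k (Suc n) = k # alternating (- k) n"

lemma walk_length_alternating: "walk_length (alternating k n) = int n * (\<bar>k\<bar> + 1)"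
  by (induction n arbitrary: k) (auto simp: algebra_simps)

lemma interaction_alternating: "interaction (alternating k (Suc n)) = int n * \<bar>k\<bar>"
proof (induction n arbitrary: k)
  case (Suc n)
  have "tilde_wedge k (- k) = \<bar>k\<bar>"
    by (cases "k = 0") (auto simp: tilde_wedge_def mult_less_0_iff zero_less_mult_iff)
  then show ?case using Suc[of "- k"] by (simp add: algebra_simps)
qed simp

lemma partition_fn_ge_square:
  "exp (\<beta> * real k ^ 2) \<le> partition_fn ((k + 1) ^ 2) \<beta> 0"
proof -
  let ?l = "alternating (int k) (Suc k)"
  have "?l \<in> Omega ((k + 1) ^ 2)"
    using walk_length_alternating[of "int k" "Suc k"] by (simp add: Omega_eq power2_eq_square algebra_simps)
  then have "exp (0 * of_int \<bar>?l ! 0\<bar> + \<beta> * of_int (interaction ?l)) \<le> partition_fn ((k + 1) ^ 2) \<beta> 0"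
    unfolding partition_fn_eq by (intro member_le_sum finite_Omega) auto
  moreover have "interaction ?l = int k * \<bar>int k\<bar>" by (rule interaction_alternating)
  ultimately show ?thesis by (simp add: power2_eq_square del: alternating.simps)
qed

section \<open>Splitting off the first stretch\<close>

lemma interaction_Cons_le: "r \<noteq> [] \<Longrightarrow> interaction (x # r) \<le> \<bar>r ! 0\<bar> + interaction r"
  by (cases r) (auto simp: tilde_wedge_le_abs)

lemma exp_weight_Cons_le:
  fixes \<beta> \<delta> :: real
  assumes "\<beta> \<ge> 0"
  shows "exp (\<delta> * of_int \<bar>x\<bar> + \<beta> * of_int (interaction (x # r)))
    \<le> exp (\<delta> * of_int \<bar>x\<bar>) * (if r = [] then 1 else exp (\<beta> * of_int \<bar>r ! 0\<bar> + \<beta> * of_int (interaction r)))"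
proof -
  have "\<beta> * of_int (interaction (x # r))
      \<le> (if r = [] then 0 else \<beta> * of_int \<bar>r ! 0\<bar> + \<beta> * of_int (interaction r))"
    using interaction_Cons_le[of r x] assms
    by (auto simp: distrib_left[symmetric] mult_left_mono simp del: of_int_abs)
  then show ?thesis by (auto simp flip: exp_add)
qed

text \<open>Removing the first stretch x of a walk and bounding its interaction with the next
  stretch y by \<open>\<bar>y\<bar>\<close> leaves a walk with wall parameter \<open>\<beta>\<close>; the empty remainder has weight 1.\<close>

definition partition_fn_tail :: "nat \<Rightarrow> real \<Rightarrow> real" where
  "partition_fn_tail n \<beta> = (if n = 0 then 1 else partition_fn n \<beta> \<beta>)"

lemma partition_fn_tail_eq:
  "partition_fn_tail n \<beta> = (\<Sum>r\<in>{r. walk_length r = int n}.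
     if r = [] then 1 else exp (\<beta> * of_int \<bar>r ! 0\<bar> + \<beta> * of_int (interaction r)))"
proof (cases "n = 0")
  case True
  then have "{r. walk_length r = int n} = {[]}" by auto
  then show ?thesis using True by (simp add: partition_fn_tail_def)
next
  case False
  then have "{r. walk_length r = int n} = Omega n" by (auto simp: Omega_eq)
  then show ?thesis using False by (simp add: partition_fn_tail_def partition_fn_eq Omega_eq)
qed

lemma finite_walk_length_eq: "finite {r. walk_length r = int n}"
proof (rule finite_subset)
  show "{r. walk_length r = int n} \<subseteq> insert [] (Omega n)" by (auto simp: Omega_eq)
qed (simp add: finite_Omega)

lemma partition_fn_le_first_stretch:
  fixes \<beta> \<delta> :: real
  assumes "\<beta> \<ge> 0" "L \<ge> 1"
  shows "partition_fn L \<beta> \<delta> \<le> (\<Sum>x\<in>{-(int L - 1)..int L - 1}.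
           exp (\<delta> * of_int \<bar>x\<bar>) * partition_fn_tail (nat (int L - 1 - \<bar>x\<bar>)) \<beta>)"
proof -
  define X where "X = {-(int L - 1)..int L - 1}"
  define R where "R x = {r. walk_length r = int (nat (int L - 1 - \<bar>x\<bar>))}" for x
  define w where "w r = (if r = [] then 1 else exp (\<beta> * of_int \<bar>r ! 0\<bar> + \<beta> * of_int (interaction r)))"
    for r
  have finite_R: "finite (R x)" for x
    unfolding R_def by (rule finite_walk_length_eq)
  have "partition_fn L \<beta> \<delta> \<le> (\<Sum>(x, r)\<in>Sigma X R. exp (\<delta> * of_int \<bar>x\<bar>) * w r)"
    unfolding partition_fn_eq
  proof (rule sum_le_included[where i = "\<lambda>(x, r). x # r"])
    show "finite (Sigma X R)" using finite_R by (auto simp: X_def)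
    show "\<forall>p\<in>Sigma X R. 0 \<le> (case p of (x, r) \<Rightarrow> exp (\<delta> * of_int \<bar>x\<bar>) * w r)"
      by (auto simp: w_def)
    show "\<forall>l\<in>Omega L. \<exists>p\<in>Sigma X R. (case p of (x, r) \<Rightarrow> x # r) = l \<and>
      exp (\<delta> * of_int \<bar>l ! 0\<bar> + \<beta> * of_int (interaction l)) \<le> (case p of (x, r) \<Rightarrow> exp (\<delta> * of_int \<bar>x\<bar>) * w r)"
    proof
      fix l assume l: "l \<in> Omega L"
      then obtain x r where l_eq: "l = x # r" by (cases l) (auto simp: Omega_eq)
      have "\<bar>x\<bar> + 1 + walk_length r = int L" using l l_eq by (simp add: Omega_eq)
      then have "(x, r) \<in> Sigma X R" using walk_length_nonneg[of r] by (auto simp: X_def R_def)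
      moreover have "exp (\<delta> * of_int \<bar>l ! 0\<bar> + \<beta> * of_int (interaction l)) \<le> exp (\<delta> * of_int \<bar>x\<bar>) * w r"
        unfolding l_eq w_def using exp_weight_Cons_le[OF assms(1)] by simp
      ultimately show "\<exists>p\<in>Sigma X R. (case p of (x, r) \<Rightarrow> x # r) = l \<and>
        exp (\<delta> * of_int \<bar>l ! 0\<bar> + \<beta> * of_int (interaction l)) \<le> (case p of (x, r) \<Rightarrow> exp (\<delta> * of_int \<bar>x\<bar>) * w r)"
        using l_eq by force
    qed
  qed (rule finite_Omega)
  also have "\<dots> = (\<Sum>x\<in>X. \<Sum>r\<in>R x. exp (\<delta> * of_int \<bar>x\<bar>) * w r)"
    by (rule sum.Sigma[symmetric]) (auto simp: X_def finite_R)
  also have "\<dots> = (\<Sum>x\<in>X. exp (\<delta> * of_int \<bar>x\<bar>) * partition_fn_tail (nat (int L - 1 - \<bar>x\<bar>)) \<beta>)"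
    by (simp add: R_def w_def partition_fn_tail_eq sum_distrib_left)
  finally show ?thesis by (simp add: X_def)
qed

lemma sum_quarter_powers_le: "(\<Sum>x\<in>{-int M..int M}. (1/4::real) ^ nat \<bar>x\<bar>) \<le> 3"
proof -
  have "(\<Sum>x\<in>{-int M..int M}. (1/4::real) ^ nat \<bar>x\<bar>) \<le> 3 - 2 * (1/4) ^ M"
  proof (induction M)
    case (Suc M)
    have "{-int (Suc M)..int (Suc M)} = insert (int M + 1) (insert (-(int M + 1)) {-int M..int M})"
      by auto
    then have "(\<Sum>x\<in>{-int (Suc M)..int (Suc M)}. (1/4::real) ^ nat \<bar>x\<bar>)
        = 2 * (1/4) ^ Suc M + (\<Sum>x\<in>{-int M..int M}. (1/4::real) ^ nat \<bar>x\<bar>)"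
      by (simp add: nat_add_distrib)
    moreover have "(1/4::real) ^ Suc M = (1/4) ^ M / 4" by simp
    moreover have "(0::real) \<le> (1/4) ^ M" by simp
    ultimately show ?case using Suc.IH by linarith
  qed simp
  moreover have "(0::real) \<le> (1/4) ^ M" by simp
  ultimately show ?thesis by linarith
qed

lemma partition_fn_tail_le_power:
  assumes "\<beta> \<ge> 0"
  shows "partition_fn_tail L \<beta> \<le> (4 * exp \<beta>) ^ L"
proof (induction L rule: less_induct)
  case (less L)
  define K where "K = 4 * exp \<beta>"
  show ?case
  proof (cases L)
    case (Suc M)
    have term_le: "exp (\<beta> * of_int \<bar>x\<bar>) * partition_fn_tail (nat (int L - 1 - \<bar>x\<bar>)) \<beta>
        \<le> K ^ M * (1/4) ^ nat \<bar>x\<bar>" if "x \<in> {-int M..int M}" for x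
    proof -
      define j where "j = nat \<bar>x\<bar>"
      have j: "j \<le> M" "nat (int L - 1 - \<bar>x\<bar>) = M - j" using that Suc by (auto simp: j_def)
      have "exp (\<beta> * of_int \<bar>x\<bar>) = exp \<beta> ^ j"
        by (simp add: j_def mult.commute flip: exp_of_nat_mult)
      moreover have "partition_fn_tail (M - j) \<beta> \<le> K ^ (M - j)"
        using less.IH[of "M - j"] Suc by (simp add: K_def)
      ultimately have "exp (\<beta> * of_int \<bar>x\<bar>) * partition_fn_tail (M - j) \<beta> \<le> exp \<beta> ^ j * K ^ (M - j)"
        by (simp add: mult_left_mono)
      also have "\<dots> = (K * (1/4)) ^ j * K ^ (M - j)" by (simp add: K_def)
      also have "\<dots> = K ^ (j + (M - j)) * (1/4) ^ j"
        by (simp only: power_mult_distrib power_add mult_ac)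
      also have "\<dots> = K ^ M * (1/4) ^ j" using j(1) by simp
      finally show ?thesis using j by (simp add: j_def)
    qed
    have "partition_fn L \<beta> \<beta> \<le> (\<Sum>x\<in>{-int M..int M}. exp (\<beta> * of_int \<bar>x\<bar>) *
        partition_fn_tail (nat (int L - 1 - \<bar>x\<bar>)) \<beta>)"
      using partition_fn_le_first_stretch[OF assms, of L \<beta>] Suc by simp
    also have "\<dots> \<le> (\<Sum>x\<in>{-int M..int M}. K ^ M * (1/4) ^ nat \<bar>x\<bar>)"
      by (rule sum_mono[OF term_le])
    also have "\<dots> \<le> K ^ M * 3"
      using sum_quarter_powers_le[of M] by (simp add: sum_distrib_left[symmetric] K_def)
    also have "\<dots> \<le> K ^ L"
    proof -
      have "1 \<le> exp \<beta>" using assms by simp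
      then have "3 \<le> K" unfolding K_def by linarith
      then show ?thesis using Suc by (simp add: mult_left_mono)
    qed
    finally show ?thesis using Suc by (simp add: partition_fn_tail_def K_def)
  qed (simp add: partition_fn_tail_def)
qed

lemma partition_fn_le_power:
  assumes "\<beta> \<ge> 0"
  shows "partition_fn L \<beta> \<beta> \<le> (4 * exp \<beta>) ^ L"
  using partition_fn_tail_le_power[OF assms, of L] by (cases "L = 0") (simp_all add: partition_fn_tail_def)

lemma partition_fn_le_of_tail_bound:
  fixes \<beta> \<delta> r C :: real
  assumes "\<beta> \<ge> 0" "\<delta> \<ge> 0" "C \<ge> 0" "\<And>n. partition_fn_tail n \<beta> \<le> C * exp (r * n)"
  shows "partition_fn L \<beta> \<delta> \<le> 2 * C * real L * exp (max \<delta> r * L)"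
proof (cases "L = 0")
  case False
  define m where "m = max \<delta> r"
  define X where "X = {-(int L - 1)..int L - 1}"
  have term_le: "exp (\<delta> * of_int \<bar>x\<bar>) * partition_fn_tail (nat (int L - 1 - \<bar>x\<bar>)) \<beta> \<le> C * exp (m * L)"
    if "x \<in> X" for x
  proof -
    define n where "n = nat (int L - 1 - \<bar>x\<bar>)"
    have n: "real n = real L - 1 - of_int \<bar>x\<bar>" using that by (auto simp: X_def n_def)
    have "\<delta> * of_int \<bar>x\<bar> + r * n \<le> m * of_int \<bar>x\<bar> + m * n"
      by (intro add_mono mult_right_mono) (auto simp: m_def)
    also have "\<dots> \<le> m * L" using assms(2) by (simp add: n m_def algebra_simps)
    finally have "exp (\<delta> * of_int \<bar>x\<bar>) * exp (r * n) \<le> exp (m * L)" by (simp flip: exp_add)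
    have "exp (\<delta> * of_int \<bar>x\<bar>) * partition_fn_tail n \<beta> \<le> exp (\<delta> * of_int \<bar>x\<bar>) * (C * exp (r * n))"
      using assms(4) by (rule mult_left_mono) simp
    also have "\<dots> = C * (exp (\<delta> * of_int \<bar>x\<bar>) * exp (r * n))" by simp
    also have "\<dots> \<le> C * exp (m * L)" by (rule mult_left_mono) fact+
    finally show ?thesis by (simp add: n_def)
  qed
  have "partition_fn L \<beta> \<delta> \<le> (\<Sum>x\<in>X. exp (\<delta> * of_int \<bar>x\<bar>) * partition_fn_tail (nat (int L - 1 - \<bar>x\<bar>)) \<beta>)"
    unfolding X_def by (rule partition_fn_le_first_stretch) (use assms False in auto)
  also have "\<dots> \<le> real (card X) * (C * exp (m * L))"
    by (rule sum_bounded_above[OF term_le])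
  also have "\<dots> \<le> 2 * real L * (C * exp (m * L))"
    using assms(3) by (intro mult_right_mono) (auto simp: X_def)
  finally show ?thesis by (simp add: m_def algebra_simps)
qed simp

lemma exp_growth_le_partition_fn_wall:
  fixes \<beta> \<delta> r :: real
  assumes "\<beta> \<ge> 0" "\<delta> \<ge> 0" "exp_growth_le (\<lambda>n. partition_fn n \<beta> \<beta>) r"
  shows "exp_growth_le (\<lambda>n. partition_fn n \<beta> \<delta>) (max \<delta> r)"
proof (rule exp_growth_le_closed)
  fix s assume s: "max \<delta> r < s"
  define r' where "r' = r + (s - max \<delta> r)"
  have "s - max \<delta> r > 0" using s by simp
  then obtain C where C: "C > 0" "\<And>n. partition_fn n \<beta> \<beta> \<le> C * exp (r' * n)"
    using assms(3) unfolding exp_growth_le_def r'_def by blast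
  have "partition_fn_tail n \<beta> \<le> max C 1 * exp (r' * n)" for n
  proof (cases "n = 0")
    case False
    have "C * exp (r' * n) \<le> max C 1 * exp (r' * n)" by (simp add: mult_right_mono)
    then have "partition_fn n \<beta> \<beta> \<le> max C 1 * exp (r' * n)" using C(2)[of n] by linarith
    then show ?thesis using False by (simp add: partition_fn_tail_def)
  qed (simp add: partition_fn_tail_def)
  then have "partition_fn n \<beta> \<delta> \<le> (2 * max C 1) * real n * exp (max \<delta> r' * n)" for n
    using partition_fn_le_of_tail_bound[OF assms(1,2)] by simp
  then have "exp_growth_le (\<lambda>n. partition_fn n \<beta> \<delta>) (max \<delta> r')"
    by (rule exp_growth_le_linear_factor)
  then show "exp_growth_le (\<lambda>n. partition_fn n \<beta> \<delta>) s"
    by (rule exp_growth_le_mono) (use s in \<open>auto simp: r'_def\<close>)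
qed

section \<open>Free energies\<close>

lemma beta_le_of_ln_partition_fn_le:
  fixes \<beta> f0 :: real
  assumes "\<And>n. n \<ge> 1 \<Longrightarrow> ln (partition_fn n \<beta> 0) \<le> f0 * n"
  shows "\<beta> \<le> f0"
proof -
  have "\<beta> * real k ^ 2 / real (k + 1) ^ 2 \<le> f0" for k
  proof -
    have "\<beta> * real k ^ 2 \<le> ln (partition_fn ((k + 1) ^ 2) \<beta> 0)"
      using partition_fn_ge_square[of \<beta> k] partition_fn_pos[of "(k + 1) ^ 2" \<beta> 0]
      by (simp add: ln_ge_iff)
    also have "\<dots> \<le> f0 * real (k + 1) ^ 2" using assms[of "(k + 1) ^ 2"] by simp
    finally show ?thesis by (simp add: divide_le_eq)
  qed
  moreover have "(\<lambda>k. \<beta> * real k ^ 2 / real (k + 1) ^ 2) \<longlonglongrightarrow> \<beta>" by real_asymp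
  ultimately show "\<beta> \<le> f0" by (intro LIMSEQ_le_const2) auto
qed

lemma free_energy_without_wall:
  fixes \<beta> :: real
  assumes "\<beta> \<ge> 0"
  obtains f0 where "(\<lambda>L. ln (partition_fn L \<beta> 0) / L) \<longlonglongrightarrow> f0"
    and "exp_growth_le (\<lambda>L. partition_fn L \<beta> 0) f0" and "\<beta> \<le> f0"
proof -
  define a where "a n = ln (partition_fn n \<beta> 0)" for n
  have nonneg: "0 \<le> a n" if "n \<ge> 1" for n
    using partition_fn_ge_exp[OF that, of 0 \<beta>] by (simp add: a_def)
  have superadd: "a m + a n \<le> a (m + n)" if "m \<ge> 1" "n \<ge> 1" for m n
  proof -
    have pos: "0 < partition_fn m \<beta> 0" "0 < partition_fn n \<beta> 0"
      using partition_fn_pos that by auto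
    then have "a m + a n = ln (partition_fn m \<beta> 0 * partition_fn n \<beta> 0)"
      by (simp add: a_def ln_mult)
    also have "\<dots> \<le> a (m + n)"
      unfolding a_def using partition_fn_supermult[OF assms, of m n] pos partition_fn_pos[of "m + n"] that
      by (subst ln_le_cancel_iff) auto
    finally show ?thesis .
  qed
  have bounded: "a n \<le> (ln 4 + \<beta>) * n" if "n \<ge> 1" for n
  proof -
    have "partition_fn n \<beta> 0 \<le> (4 * exp \<beta>) ^ n"
      using partition_fn_mono[OF assms, of n \<beta>] partition_fn_le_power[OF assms, of n] by simp
    then have "a n \<le> ln ((4 * exp \<beta>) ^ n)" unfolding a_def using partition_fn_pos[OF that] by simp
    also have "\<dots> = (ln 4 + \<beta>) * n" by (simp add: ln_realpow ln_mult algebra_simps)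
    finally show ?thesis .
  qed
  obtain f0 where lim: "(\<lambda>n. a n / n) \<longlonglongrightarrow> f0" and le: "\<And>n. n \<ge> 1 \<Longrightarrow> a n \<le> f0 * n"
    using superadditive_tendsto[OF nonneg superadd bounded] by blast
  have "partition_fn n \<beta> 0 \<le> 1 * exp (f0 * n)" for n
  proof (cases "n = 0")
    case False
    then have "partition_fn n \<beta> 0 = exp (a n)" using partition_fn_pos[of n \<beta> 0] by (simp add: a_def)
    then show ?thesis using le[of n] False by simp
  qed simp
  then have growth: "exp_growth_le (\<lambda>L. partition_fn L \<beta> 0) f0" by (rule exp_growth_leI[rotated]) simp
  have "\<beta> \<le> f0" by (rule beta_le_of_ln_partition_fn_le) (use le in \<open>simp add: a_def\<close>)
  with lim growth show thesis by (intro that) (simp_all add: a_def)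
qed

lemma exp_growth_le_partition_fn_crude:
  assumes "\<beta> \<ge> 0"
  shows "exp_growth_le (\<lambda>n. partition_fn n \<beta> \<beta>) (\<beta> + ln 4)"
proof (rule exp_growth_leI[of 1])
  fix n :: nat
  have "exp ((\<beta> + ln 4) * n) = exp (\<beta> + ln 4) ^ n"
    by (simp add: mult.commute flip: exp_of_nat_mult)
  also have "exp (\<beta> + ln 4) = 4 * exp \<beta>" by (simp add: exp_add)
  finally show "partition_fn n \<beta> \<beta> \<le> 1 * exp ((\<beta> + ln 4) * n)"
    using partition_fn_le_power[OF assms, of n] by simp
qed simp

lemma exp_growth_le_partition_fn_imp_ge:
  assumes "exp_growth_le (\<lambda>n. partition_fn n \<beta> \<beta>) r"
  shows "\<beta> \<le> r"
proof (rule exp_growth_le_lower_bound[OF assms])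
  show "exp (- \<beta>) * exp (\<beta> * n) \<le> partition_fn n \<beta> \<beta>" if "n \<ge> 1" for n
    using partition_fn_ge_exp[OF that, of \<beta> \<beta>] by (simp add: algebra_simps flip: exp_add)
qed simp

text \<open>By log-convexity in the wall parameter, a rate \<open>r > f0\<close> for the walks with wall parameter
  \<open>\<beta>\<close> would improve to \<open>(\<beta>/r) r + (1 - \<beta>/r) f0 < r\<close>; hence the infimum of all rates is at most f0.\<close>

lemma exp_growth_le_partition_fn_self:
  fixes \<beta> f0 :: real
  assumes "\<beta> \<ge> 0" "exp_growth_le (\<lambda>n. partition_fn n \<beta> 0) f0" "\<beta> \<le> f0"
  shows "exp_growth_le (\<lambda>n. partition_fn n \<beta> \<beta>) f0"
proof -
  let ?Z = "\<lambda>n. partition_fn n \<beta> \<beta>"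
  define S where "S = {r. exp_growth_le ?Z r}"
  have S_ne: "S \<noteq> {}"
    using exp_growth_le_partition_fn_crude[OF assms(1)] by (auto simp: S_def)
  have bdd: "bdd_below S"
    using exp_growth_le_partition_fn_imp_ge by (intro bdd_belowI[of _ \<beta>]) (simp add: S_def)
  define r0 where "r0 = Inf S"
  have r0_rate: "exp_growth_le ?Z r0"
  proof (rule exp_growth_le_closed)
    fix s assume "r0 < s"
    then obtain r where "r \<in> S" "r < s" using cInf_less_iff[OF S_ne bdd] by (auto simp: r0_def)
    then show "exp_growth_le ?Z s" by (auto simp: S_def intro: exp_growth_le_mono)
  qed
  have "r0 \<le> f0"
  proof (rule ccontr)
    assume "\<not> r0 \<le> f0"
    then have r0: "f0 < r0" "0 < r0" using assms(1,3) by linarith+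
    define t where "t = \<beta> / r0"
    have t: "0 \<le> t" "t < 1" "t * r0 = \<beta>" using assms(1,3) r0 by (auto simp: t_def)
    have wall_rate: "exp_growth_le (\<lambda>n. partition_fn n \<beta> r0) r0"
      using exp_growth_le_partition_fn_wall[OF assms(1) _ r0_rate, where \<delta> = r0] r0 by simp
    have "exp_growth_le ?Z (t * r0 + (1 - t) * f0)"
    proof (rule exp_growth_le_powr_mult[OF wall_rate assms(2)])
      show "?Z n \<le> partition_fn n \<beta> r0 powr t * partition_fn n \<beta> 0 powr (1 - t)" for n
        using partition_fn_powr_le[of t n \<beta> r0] t by simp
    qed (use t in \<open>simp_all add: partition_fn_nonneg\<close>)
    then have "r0 \<le> t * r0 + (1 - t) * f0"
      unfolding r0_def by (intro cInf_lower bdd) (simp add: S_def)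
    moreover have "(1 - t) * f0 < (1 - t) * r0" using t r0 by simp
    ultimately show False by (simp add: algebra_simps)
  qed
  then show ?thesis by (rule exp_growth_le_mono[OF r0_rate])
qed

lemma ln_partition_fn_div_ge:
  fixes \<beta> \<delta> :: real
  assumes "n \<ge> 1" "\<delta> \<ge> 0"
  shows "max (ln (partition_fn n \<beta> 0) / n) (\<delta> * (real n - 1) / n) \<le> ln (partition_fn n \<beta> \<delta>) / n"
proof -
  have "ln (partition_fn n \<beta> 0) \<le> ln (partition_fn n \<beta> \<delta>)"
    using partition_fn_mono[OF assms(2)] partition_fn_pos[OF assms(1)] by simp
  moreover have "\<delta> * (real n - 1) \<le> ln (partition_fn n \<beta> \<delta>)"
    using partition_fn_ge_exp[OF assms(1)] partition_fn_pos[OF assms(1)] by (simp add: ln_ge_iff)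
  ultimately show ?thesis by (simp add: divide_right_mono)
qed

theorem proposition2p1:
  fixes \<beta> \<delta> :: real
  assumes "\<beta> \<ge> 0" and "\<delta> \<ge> 0"
  shows "\<exists>f0 f. (\<lambda>L. ln (partition_fn L \<beta> 0) / real L) \<longlonglongrightarrow> f0
              \<and> (\<lambda>L. ln (partition_fn L \<beta> \<delta>) / real L) \<longlonglongrightarrow> f
              \<and> 0 \<le> f \<and> f = max f0 \<delta>"
proof -
  obtain f0 where lim0: "(\<lambda>L. ln (partition_fn L \<beta> 0) / L) \<longlonglongrightarrow> f0"
    and rate0: "exp_growth_le (\<lambda>L. partition_fn L \<beta> 0) f0" and "\<beta> \<le> f0"
    using free_energy_without_wall[OF assms(1)] .
  have "exp_growth_le (\<lambda>n. partition_fn n \<beta> \<delta>) (max f0 \<delta>)"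
    using exp_growth_le_partition_fn_wall[OF assms exp_growth_le_partition_fn_self[OF assms(1) rate0 \<open>\<beta> \<le> f0\<close>]]
    by (simp add: max.commute)
  moreover have "(\<lambda>n. max (ln (partition_fn n \<beta> 0) / n) (\<delta> * (real n - 1) / n)) \<longlonglongrightarrow> max f0 \<delta>"
    by (intro tendsto_max lim0) real_asymp
  moreover have "\<forall>\<^sub>F n in sequentially. 0 < partition_fn n \<beta> \<delta> \<and>
      max (ln (partition_fn n \<beta> 0) / n) (\<delta> * (real n - 1) / n) \<le> ln (partition_fn n \<beta> \<delta>) / n"
    using eventually_ge_at_top[of 1]
    by eventually_elim (blast intro: partition_fn_pos ln_partition_fn_div_ge assms(2))
  ultimately have "(\<lambda>L. ln (partition_fn L \<beta> \<delta>) / L) \<longlonglongrightarrow> max f0 \<delta>"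
    by (rule exp_growth_le_tendsto)
  with lim0 assms(2) show ?thesis by auto
qed

end
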